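(* Let $N_A,N_B\ge1$ be integers, $\overline{\gamma}_B>0$, $\sigma\in(0,1)$ and $R_b\ge0$. Define $p_{suc}(\mu)=1-\operatorname{P}\!\left(N_B,\mu/\overline{\gamma}_B\right)^{N_A}$ and $\alpha=\Gamma(N_B+1)^{1/N_B}$. If $p_{suc}(2^{R_b}-1)\ge\sigma$, then $$R_b\le\log_2\!\left(1+\overline{\gamma}_B\,\alpha\,\log\!\left(\left(1-(1-\sigma)^{\frac{1}{N_A N_B}}\right)^{-1}\right)\right),$$ where $\log$ is the natural logarithm.
   Context: $\operatorname{P}(s,z)=\gamma(s,z)/\Gamma(s)$ denotes the regularized lower incomplete gamma function, $\gamma(s,z)=\int_0^z t^{s-1}e^{-t}\,dt$. $p_{suc}(\mu)$ is the probability that the post-selection, post-combining SNR of the legitimate link exceeds $\mu$, for transmit antenna selection over $N_A$ antennas and maximal ratio combining over $N_B$ antennas in Rayleigh fading with average per-branch SNR $\overline{\gamma}_B$. *)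

theory Defs
  imports "HOL-Analysis.Analysis"
begin

definition lower_inc_gamma :: "real \<Rightarrow> real \<Rightarrow> real" where
  "lower_inc_gamma s z = integral {0..z} (\<lambda>t. t powr (s - 1) * exp (- t))"

definition reg_lower_inc_gamma :: "real \<Rightarrow> real \<Rightarrow> real" where
  "reg_lower_inc_gamma s z = lower_inc_gamma s z / Gamma s"

text \<open>Success probability for TAS over NA antennas with MRC over NB antennas.\<close>
definition p_suc :: "nat \<Rightarrow> nat \<Rightarrow> real \<Rightarrow> real \<Rightarrow> real" where
  "p_suc NA NB gB \<mu> = 1 - (reg_lower_inc_gamma (real NB) (\<mu> / gB)) ^ NA"

end

(*
  With a = (n!)^(1/n), the heart of the matter is the lower bound
  (1 - e^(-y))^n <= P(n, a y).  For integer n, P(n, x) = 1 - e^(-x) sum_{k<n} x^k/k!, so the gap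
  D(y) = P(n, a y) - (1 - e^(-y))^n vanishes at 0 and at infinity.  Writing a = 1 + (n-1) b with
  0 <= b <= 1, the derivative D'(y) has the sign of (y e^(-b y))^(n-1) - (1 - e^(-y))^(n-1), i.e. the
  opposite sign of r(y) = e^(b y) - e^((b-1) y) - y.  As r(0) = r'(0) = 0 and r'' is increasing, once
  r is positive it stays positive; so D first increases and then decreases, and D >= 0.
  Raising the bound to the power N_A and inverting (1 - e^(-x/a))^(N_A N_B) <= 1 - sigma at
  x = (2^R_b - 1) / gamma_B gives the claim.
*)
theory Submission
  imports Defs
begin

text \<open>The regularized upper incomplete gamma function \<open>Q(n, x) = 1 - P(n, x)\<close> for integer \<open>n\<close>.\<close>

definition reg_upper_inc_gamma_nat :: "nat \<Rightarrow> real \<Rightarrow> real" where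
  "reg_upper_inc_gamma_nat n x = exp (- x) * (\<Sum>k<n. x ^ k / fact k)"

lemma has_real_derivative_reg_upper_inc_gamma_nat:
  "(reg_upper_inc_gamma_nat (Suc m) has_real_derivative - exp (- x) * x ^ m / fact m) (at x)"
proof (induction m)
  case 0
  show ?case by (auto simp: reg_upper_inc_gamma_nat_def intro!: derivative_eq_intros)
next
  case (Suc m)
  have split: "reg_upper_inc_gamma_nat (Suc (Suc m)) =
      (\<lambda>x. reg_upper_inc_gamma_nat (Suc m) x + exp (- x) * (x ^ Suc m / fact (Suc m)))"
    by (simp add: fun_eq_iff distrib_left reg_upper_inc_gamma_nat_def del: fact_Suc power_Suc)
  have power: "((\<lambda>x. x ^ Suc m / fact (Suc m)) has_real_derivative x ^ m / fact m) (at x)"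
    by (auto intro!: derivative_eq_intros simp del: fact_Suc power_Suc simp: fact_Suc)
  have exp: "((\<lambda>x. exp (- x)) has_real_derivative - exp (- x)) (at x)"
    by (auto intro!: derivative_eq_intros)
  show ?case
    using DERIV_add[OF Suc DERIV_mult[OF exp power]] unfolding split
    by (simp add: algebra_simps del: fact_Suc power_Suc)
qed

lemma reg_upper_inc_gamma_nat_0: "n \<ge> 1 \<Longrightarrow> reg_upper_inc_gamma_nat n 0 = 1"
  by (cases n) (simp_all add: reg_upper_inc_gamma_nat_def lessThan_Suc_eq_insert_0 sum.reindex)

lemma tendsto_reg_upper_inc_gamma_nat_at_top: "(reg_upper_inc_gamma_nat n \<longlongrightarrow> 0) at_top"
proof -
  have "((\<lambda>x::real. \<Sum>k<n. (x ^ k / exp x) / fact k) \<longlongrightarrow> (\<Sum>k<n. 0 / fact k)) at_top"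
    by (intro tendsto_intros tendsto_power_div_exp_0) simp
  moreover have "reg_upper_inc_gamma_nat n = (\<lambda>x. \<Sum>k<n. (x ^ k / exp x) / fact k)"
    by (simp add: fun_eq_iff reg_upper_inc_gamma_nat_def sum_distrib_left exp_minus field_simps)
  ultimately show ?thesis
    by simp
qed

lemma reg_lower_inc_gamma_nat:
  assumes "n \<ge> 1" and "x \<ge> 0"
  shows "reg_lower_inc_gamma (real n) x = 1 - reg_upper_inc_gamma_nat n x"
proof -
  obtain m where m: "n = Suc m" using assms(1) by (cases n) auto
  define G where "G = (\<lambda>t. - fact m * reg_upper_inc_gamma_nat n t)"
  have G': "(G has_real_derivative t ^ m * exp (- t)) (at t)" for t
    using DERIV_cmult[OF has_real_derivative_reg_upper_inc_gamma_nat, of "- fact m" m t]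
    by (simp add: G_def m mult.commute)
  have "((\<lambda>t. t ^ m * exp (- t)) has_integral G x - G 0) {0..x}"
    by (rule fundamental_theorem_of_calculus[OF assms(2)])
      (auto intro!: has_field_derivative_at_within G'
        simp: has_real_derivative_iff_has_vector_derivative[symmetric])
  then have "((\<lambda>t. t powr (real n - 1) * exp (- t)) has_integral G x - G 0) {0..x}"
    by (rule has_integral_spike_finite[of "{0}", rotated 2]) (auto simp: m powr_realpow)
  moreover have "Gamma (real n) = fact m"
    using Gamma_fact[of m, where 'a = real] by (simp add: m add.commute)
  ultimately have "reg_lower_inc_gamma (real n) x = (G x - G 0) / fact m"
    by (simp add: reg_lower_inc_gamma_def lower_inc_gamma_def integral_unique)
  then show ?thesis
    using assms(1) by (simp add: G_def reg_upper_inc_gamma_nat_0 diff_divide_distrib)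
qed

lemma pos_persists_of_mono_second_deriv:
  fixes f :: "real \<Rightarrow> real"
  assumes f': "\<And>t. (f has_real_derivative f' t) (at t)"
    and f'': "\<And>t. (f' has_real_derivative f'' t) (at t)"
    and "mono f''" and "f 0 = 0" and "f' 0 = 0"
    and "0 \<le> z" and "z \<le> w" and "f z > 0"
  shows "f w > 0"
proof -
  have "z \<noteq> 0" using \<open>f 0 = 0\<close> \<open>f z > 0\<close> by auto
  then obtain c where c: "0 < c" "c < z" "f z - f 0 = (z - 0) * f' c"
    using MVT2[of 0 z f f'] f' \<open>0 \<le> z\<close> by auto
  have "f' c > 0"
    using c \<open>f 0 = 0\<close> \<open>f z > 0\<close> by (simp add: zero_less_mult_iff)
  then obtain d where d: "0 < d" "d < c" "f' c - f' 0 = (c - 0) * f'' d"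
    using MVT2[of 0 c f' f''] f'' c(1) by auto
  have "f'' d > 0"
    using d \<open>f' 0 = 0\<close> \<open>f' c > 0\<close> by (simp add: zero_less_mult_iff)
  have f''_pos: "f'' t > 0" if "d \<le> t" for t
    using monoD[OF \<open>mono f''\<close> that] \<open>f'' d > 0\<close> by simp
  have "f' c \<le> f' t" if "c \<le> t" for t
    using d(2) by (intro DERIV_nonneg_imp_nondecreasing[OF that])
      (metis f'' f''_pos less_imp_le order.trans)
  then have "f z \<le> f w"
    using c(2) \<open>f' c > 0\<close>
    by (intro DERIV_nonneg_imp_nondecreasing[OF \<open>z \<le> w\<close>])
      (metis f' less_imp_le order.trans)
  with \<open>f z > 0\<close> show ?thesis by simp
qed

lemma nonneg_of_deriv_nonpos_after_neg:
  fixes D :: "real \<Rightarrow> real"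
  assumes D': "\<And>t. 0 \<le> t \<Longrightarrow> (D has_real_derivative D' t) (at t)"
    and "0 \<le> D 0" and "(D \<longlongrightarrow> 0) at_top"
    and stays_nonpos: "\<And>s t. 0 \<le> s \<Longrightarrow> s \<le> t \<Longrightarrow> D' s < 0 \<Longrightarrow> D' t \<le> 0"
    and "0 \<le> y"
  shows "0 \<le> D y"
proof (cases "\<forall>t\<in>{0..y}. 0 \<le> D' t")
  case True
  then have "D 0 \<le> D y"
    by (intro DERIV_nonneg_imp_nondecreasing[OF \<open>0 \<le> y\<close>]) (auto intro: D')
  with \<open>0 \<le> D 0\<close> show ?thesis by simp
next
  case False
  then obtain s where "0 \<le> s" "s \<le> y" "D' s < 0" by (auto simp: not_le)
  have "\<forall>\<^sub>F Y in at_top. D Y \<le> D y"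
    using eventually_ge_at_top[of y]
  proof eventually_elim
    case (elim Y)
    show ?case
      using \<open>0 \<le> s\<close> \<open>s \<le> y\<close> \<open>D' s < 0\<close> \<open>0 \<le> y\<close>
      by (intro DERIV_nonpos_imp_nonincreasing[OF elim]) (force intro: D' stays_nonpos)
  qed
  with \<open>(D \<longlongrightarrow> 0) at_top\<close> show ?thesis
    by (simp add: tendsto_upperbound)
qed

lemma power_root_fact: "n \<ge> 1 \<Longrightarrow> (fact n powr (1 / real n)) ^ n = (fact n :: real)"
  by (simp add: powr_realpow[symmetric] powr_powr)

lemma root_fact_ge_1: "1 \<le> (fact n :: real) powr (1 / real n)"
  by (rule ge_one_powr_ge_zero) auto

lemma root_fact_le: "n \<ge> 1 \<Longrightarrow> (fact n :: real) powr (1 / real n) \<le> real n"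
proof -
  assume "n \<ge> 1"
  have "(fact n :: real) powr (1 / real n) \<le> (real n ^ n) powr (1 / real n)"
    by (intro powr_mono2) (auto simp flip: of_nat_power intro: fact_le_power)
  also have "\<dots> = real n"
    using \<open>n \<ge> 1\<close> by (simp add: powr_realpow[symmetric] powr_powr)
  finally show ?thesis .
qed

lemma exp_gap_pos_persists:
  fixes b z w :: real
  assumes "0 \<le> b" and "b \<le> 1" and "0 \<le> z" and "z \<le> w"
    and "exp (b * z) - exp ((b - 1) * z) - z > 0"
  shows "exp (b * w) - exp ((b - 1) * w) - w > 0"
proof (rule pos_persists_of_mono_second_deriv[where f = "\<lambda>t. exp (b * t) - exp ((b - 1) * t) - t"])
  show "((\<lambda>t. exp (b * t) - exp ((b - 1) * t) - t) has_real_derivative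
      b * exp (b * t) - (b - 1) * exp ((b - 1) * t) - 1) (at t)" for t
    by (auto intro!: derivative_eq_intros)
  show "((\<lambda>t. b * exp (b * t) - (b - 1) * exp ((b - 1) * t) - 1) has_real_derivative
      b\<^sup>2 * exp (b * t) - (b - 1)\<^sup>2 * exp ((b - 1) * t)) (at t)" for t
    by (auto intro!: derivative_eq_intros simp: power2_eq_square)
  show "mono (\<lambda>t. b\<^sup>2 * exp (b * t) - (b - 1)\<^sup>2 * exp ((b - 1) * t))"
  proof (rule monoI)
    fix s t :: real assume "s \<le> t"
    then have "exp (b * s) \<le> exp (b * t)" and "exp ((b - 1) * t) \<le> exp ((b - 1) * s)"
      using assms(1,2) by (auto intro: mult_left_mono mult_left_mono_neg)
    then show "b\<^sup>2 * exp (b * s) - (b - 1)\<^sup>2 * exp ((b - 1) * s)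
        \<le> b\<^sup>2 * exp (b * t) - (b - 1)\<^sup>2 * exp ((b - 1) * t)"
      by (intro diff_mono mult_left_mono) auto
  qed
qed (use assms in auto)

lemma has_real_derivative_gamma_exp_gap:
  fixes a b t :: real
  assumes a_power: "a ^ Suc m = fact (Suc m)" and a_eq: "a = 1 + real m * b"
  shows "((\<lambda>y. 1 - reg_upper_inc_gamma_nat (Suc m) (a * y) - (1 - exp (- y)) ^ Suc m)
      has_real_derivative
        real (Suc m) * exp (- t) * ((t * exp (- (b * t))) ^ m - (1 - exp (- t)) ^ m)) (at t)"
proof -
  have exp_eq: "exp (- (a * t)) = exp (- t) * exp (- (b * t)) ^ m"
    unfolding a_eq by (simp add: algebra_simps flip: exp_of_nat_mult exp_add)
  have "((\<lambda>y. reg_upper_inc_gamma_nat (Suc m) (a * y)) has_real_derivative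
      - exp (- (a * t)) * (a * t) ^ m / fact m * a) (at t)"
    by (rule DERIV_chain2[OF has_real_derivative_reg_upper_inc_gamma_nat])
      (auto intro!: derivative_eq_intros)
  also have "- exp (- (a * t)) * (a * t) ^ m / fact m * a
      = - ((a * a ^ m) / fact m * t ^ m * exp (- (a * t)))"
    by (simp add: power_mult_distrib)
  also have "\<dots> = - (real (Suc m) * exp (- t) * (t * exp (- (b * t))) ^ m)"
    using a_power by (simp add: exp_eq power_mult_distrib)
  finally have "((\<lambda>y. 1 - reg_upper_inc_gamma_nat (Suc m) (a * y) - (1 - exp (- y)) ^ Suc m)
      has_real_derivative 0 - - (real (Suc m) * exp (- t) * (t * exp (- (b * t))) ^ m)
        - real (Suc m) * (1 - exp (- t)) ^ m * exp (- t)) (at t)"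
    by (auto intro!: derivative_eq_intros simp del: power_Suc)
  then show ?thesis
    by (simp add: algebra_simps)
qed

lemma power_one_minus_exp_le_reg_lower_inc_gamma:
  assumes "n \<ge> 1" and "0 \<le> y"
  shows "(1 - exp (- y)) ^ n \<le> reg_lower_inc_gamma (real n) (fact n powr (1 / real n) * y)"
proof -
  obtain m where n: "n = Suc m" using assms(1) by (cases n) auto
  define a :: real where "a = fact n powr (1 / real n)"
  define b where "b = (a - 1) / real m"
  \<comment> \<open>so that \<open>exp (- a t) = exp (- t) * exp (- b t) ^ m\<close>; for \<open>n = 1\<close> division by zero gives \<open>b = 0\<close>\<close>
  have "1 \<le> a" and "a \<le> real n" and a_power: "a ^ n = fact n"
    using assms(1) by (simp_all add: a_def root_fact_ge_1 root_fact_le power_root_fact)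
  have "0 \<le> b" "b \<le> 1"
    using \<open>1 \<le> a\<close> \<open>a \<le> real n\<close> by (auto simp: b_def n divide_le_eq)
  have a_eq: "a = 1 + real m * b"
    using \<open>1 \<le> a\<close> \<open>a \<le> real n\<close> by (cases "m = 0") (auto simp: b_def n)
  define r where "r t = exp (b * t) - exp ((b - 1) * t) - t" for t
  define D where "D y = 1 - reg_upper_inc_gamma_nat n (a * y) - (1 - exp (- y)) ^ n" for y
  define D' where "D' t = real n * exp (- t) * ((t * exp (- (b * t))) ^ m - (1 - exp (- t)) ^ m)"
    for t
  have r_eq: "r t = exp (b * t) * ((1 - exp (- t)) - t * exp (- (b * t)))" for t
    by (simp add: r_def algebra_simps exp_minus_inverse flip: exp_add)
  have r_pos_of_D'_neg: "0 < r t" if "0 \<le> t" "D' t < 0" for t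
  proof -
    have "(t * exp (- (b * t))) ^ m < (1 - exp (- t)) ^ m"
      using that(2) by (simp add: D'_def mult_less_0_iff)
    then have "t * exp (- (b * t)) < 1 - exp (- t)"
      by (rule power_less_imp_less_base) (use that(1) in simp)
    then show ?thesis
      by (simp add: r_eq)
  qed
  have D'_nonpos_of_r_pos: "D' t \<le> 0" if "0 \<le> t" "0 < r t" for t
  proof -
    have "t * exp (- (b * t)) \<le> 1 - exp (- t)"
      using that(2) by (simp add: r_eq zero_less_mult_iff)
    then have "(t * exp (- (b * t))) ^ m \<le> (1 - exp (- t)) ^ m"
      by (rule power_mono) (use that(1) in simp)
    then show ?thesis
      by (simp add: D'_def mult_nonneg_nonpos)
  qed
  have "0 \<le> D y"
  proof (rule nonneg_of_deriv_nonpos_after_neg[where D = D and D' = D'])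
    show "(D has_real_derivative D' t) (at t)" if "0 \<le> t" for t
      using has_real_derivative_gamma_exp_gap[OF a_power[unfolded n] a_eq, of t]
      unfolding D_def D'_def n by simp
    show "0 \<le> D 0"
      by (simp add: D_def n reg_upper_inc_gamma_nat_0)
    have "filterlim (\<lambda>y. a * y) at_top at_top"
      using \<open>1 \<le> a\<close> by (intro filterlim_tendsto_pos_mult_at_top[OF tendsto_const _ filterlim_ident]) auto
    then have "(D \<longlongrightarrow> 1 - 0 - (1 - 0) ^ n) at_top"
      unfolding D_def
      by (intro tendsto_intros filterlim_compose[OF tendsto_reg_upper_inc_gamma_nat_at_top]
          filterlim_compose[OF exp_at_bot filterlim_uminus_at_bot_at_top])
    then show "(D \<longlongrightarrow> 0) at_top"
      using assms(1) by simp
    show "D' t \<le> 0" if "0 \<le> s" "s \<le> t" "D' s < 0" for s t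
    proof -
      have "r 0 = 0" by (simp add: r_def)
      with that have "0 < r t"
        using exp_gap_pos_persists[OF \<open>0 \<le> b\<close> \<open>b \<le> 1\<close>] r_pos_of_D'_neg unfolding r_def by blast
      with that show ?thesis
        using D'_nonpos_of_r_pos by simp
    qed
  qed (fact assms(2))
  then show ?thesis
    using assms \<open>1 \<le> a\<close> reg_lower_inc_gamma_nat[of n]
    by (simp add: D_def a_def[symmetric])
qed

lemma le_powr_inverse_of_power_le:
  fixes v w :: real
  assumes "0 \<le> v" and "n > 0" and "v ^ n \<le> w"
  shows "v \<le> w powr (1 / real n)"
proof -
  have "v = (v ^ n) powr (1 / real n)"
    using assms(1,2) by (cases "v = 0") (simp_all add: powr_realpow[symmetric] powr_powr)
  also have "\<dots> \<le> w powr (1 / real n)"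
    using assms by (intro powr_mono2) auto
  finally show ?thesis .
qed

lemma le_ln_inverse_of_power_one_minus_exp_le:
  fixes y \<sigma> :: real
  assumes "0 \<le> y" and "n > 0" and "0 < \<sigma>" and "(1 - exp (- y)) ^ n \<le> 1 - \<sigma>"
  shows "y \<le> ln (inverse (1 - (1 - \<sigma>) powr (1 / real n)))"
proof -
  define c where "c = (1 - \<sigma>) powr (1 / real n)"
  have "0 \<le> (1 - exp (- y)) ^ n"
    using assms(1) by simp
  then have "c < 1"
    using powr_less_mono2[of "1 / real n" "1 - \<sigma>" 1] assms(2-4) by (simp add: c_def)
  have "1 - exp (- y) \<le> c"
    unfolding c_def using assms by (intro le_powr_inverse_of_power_le) auto
  then have "ln (1 - c) \<le> ln (exp (- y))"
    using \<open>c < 1\<close> by (subst ln_le_cancel_iff) auto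
  with \<open>c < 1\<close> show ?thesis
    by (simp add: c_def ln_inverse)
qed

theorem proposition1:
  fixes NA NB :: nat and gB \<sigma> Rb :: real
  assumes "NA \<ge> 1" and "NB \<ge> 1" and "gB > 0"
    and "0 < \<sigma>" and "\<sigma> < 1" and "Rb \<ge> 0"
    and "p_suc NA NB gB (2 powr Rb - 1) \<ge> \<sigma>"
  shows "Rb \<le> log 2 (1 + gB * (Gamma (real NB + 1) powr (1 / real NB))
            * ln (inverse (1 - (1 - \<sigma>) powr (1 / (real NA * real NB)))))"
proof -
  define a :: real where "a = fact NB powr (1 / real NB)"
  define x where "x = (2 powr Rb - 1) / gB"
  have "1 \<le> a"
    by (simp add: a_def root_fact_ge_1)
  have "1 \<le> 2 powr Rb"
    using assms(6) by (intro ge_one_powr_ge_zero) auto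
  then have "0 \<le> x"
    using assms(3) by (simp add: x_def)
  have "((1 - exp (- (x / a))) ^ NB) ^ NA \<le> reg_lower_inc_gamma (real NB) x ^ NA"
    using power_one_minus_exp_le_reg_lower_inc_gamma[OF assms(2), of "x / a"] \<open>0 \<le> x\<close> \<open>1 \<le> a\<close>
    by (intro power_mono) (auto simp: a_def)
  also have "\<dots> \<le> 1 - \<sigma>"
    using assms(7) by (simp add: p_suc_def x_def)
  finally have "x / a \<le> ln (inverse (1 - (1 - \<sigma>) powr (1 / real (NA * NB))))"
    using assms(1,2,4) \<open>0 \<le> x\<close> \<open>1 \<le> a\<close>
    by (intro le_ln_inverse_of_power_one_minus_exp_le) (simp_all add: power_mult mult.commute[of NA])
  then have "2 powr Rb \<le> 1 + gB * a * ln (inverse (1 - (1 - \<sigma>) powr (1 / (real NA * real NB))))"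
    using assms(3) \<open>1 \<le> a\<close> by (simp add: x_def field_simps)
  moreover have "Gamma (real NB + 1) = fact NB"
    using Gamma_fact[of NB] by (simp add: add.commute)
  ultimately show ?thesis
    using \<open>1 \<le> 2 powr Rb\<close> by (subst le_log_iff) (auto simp: a_def)
qed

end
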